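(* Let $k\ge1$, let $A_k$ be the matrix defined below, and let $\mathbf{b}=(\mathbf{w}_1,\mathbf{w}_2,c)^{\mathsf T}\in\mathbb{Z}^{2k+1}$ with $\mathbf{w}_1,\mathbf{w}_2\in\mathbb{Z}^k$, $c\in\mathbb{Z}$, such that $\mathcal{F}_{A_k}(\mathbf{b})\neq\emptyset$. Consider the fiber graph $G=G_{A_k,\mathbf{b},\mathcal{G}(A_k)}$ and let $s\in[l(\mathbf{b}),u(\mathbf{b})]$ be an integer. Then a vertex $\mathbf{v}\in C_s(\mathbf{b})$ has a neighbor in $C_{s-1}(\mathbf{b})$ if and only if $s>l(\mathbf{b})$, and in this case it has at least $2^k$ neighbors in $C_{s-1}(\mathbf{b})$. Likewise, $\mathbf{v}$ has a neighbor in $C_{s+1}(\mathbf{b})$ if and only if $s<u(\mathbf{b})$, and in this case it has at least $2^k$ neighbors in $C_{s+1}(\mathbf{b})$.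
   Context: $I_k$ is the $k\times k$ identity, $\mathbf{1}_k$ the all-ones vector in $\mathbb{Z}^k$. Define $$A_k=\begin{pmatrix} I_k & I_k & 0 & 0 & -\mathbf{1}_k & \mathbf{0}\\ 0&0&I_k&I_k&\mathbf{0}&-\mathbf{1}_k\\ 0&0&0&0&1&1\end{pmatrix}\in\mathbb{Z}^{(2k+1)\times(4k+2)}$$ (zero blocks of appropriate sizes; last two columns are single columns). Fiber: $\mathcal{F}_A(\mathbf{b})=\{\mathbf{u}\in\mathbb{Z}^n_{\ge0}:A\mathbf{u}=\mathbf{b}\}$. For $\mathcal{M}\subset\mathbb{Z}^n$, $G_{A,\mathbf{b},\mathcal{M}}$ is the graph on $\mathcal{F}_A(\mathbf{b})$ with distinct $\mathbf{u},\mathbf{v}$ adjacent iff $\mathbf{u}-\mathbf{v}\in\pm\mathcal{M}$. The Graver basis $\mathcal{G}(A)$ is the set of $\sqsubseteq$-minimal elements of $(\ker A\cap\mathbb{Z}^n)\setminus\{\mathbf{0}\}$, where $\mathbf{u}\sqsubseteq\mathbf{v}$ iff $u_iv_i\ge0$ and $|u_i|\le|v_i|$ for all $i$. For $\mathbf{w}\in\mathbb{Z}^k$, $\mathbf{w}^-\in\mathbb{Z}^k_{\ge0}$ has entries $\max(-w_i,0)$. For $\mathbf{b}=(\mathbf{w}_1,\mathbf{w}_2,c)$ set $l(\mathbf{b}):=\|\mathbf{w}_1^-\|_\infty$ and $u(\mathbf{b}):=c-\|\mathbf{w}_2^-\|_\infty$. For an integer $s$, $C_s(\mathbf{b}):=\{\mathbf{u}\in\mathcal{F}_{A_k}(\mathbf{b}):u_{4k+1}=s\}$.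 *)

theory Defs
  imports Main
begin

text \<open>Vectors in Z^n are modelled as functions nat => int, with components indexed
  0..n-1 (0-based) and required to vanish outside {0..<n}. Matrices are functions
  nat => nat => int (row, column), 0-based.\<close>

definition zvec :: "nat \<Rightarrow> (nat \<Rightarrow> int) set" where
  "zvec n = {u. \<forall>i\<ge>n. u i = 0}"

definition mat_vec :: "nat \<Rightarrow> (nat \<Rightarrow> nat \<Rightarrow> int) \<Rightarrow> (nat \<Rightarrow> int) \<Rightarrow> nat \<Rightarrow> int" where
  "mat_vec n A u = (\<lambda>i. \<Sum>j<n. A i j * u j)"

text \<open>The matrix A_k of size (2k+1) x (4k+2), 0-based: column blocks
  [0,k), [k,2k), [2k,3k), [3k,4k), then column 4k and column 4k+1.\<close>
definition Ak :: "nat \<Rightarrow> nat \<Rightarrow> nat \<Rightarrow> int" where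
  "Ak k i j =
     (if i < k then
        (if j = i \<or> j = k + i then 1 else if j = 4*k then -1 else 0)
      else if i < 2*k then
        (if j = 2*k + (i - k) \<or> j = 3*k + (i - k) then 1 else if j = 4*k + 1 then -1 else 0)
      else if i = 2*k then
        (if j = 4*k \<or> j = 4*k + 1 then 1 else 0)
      else 0)"

definition fiber :: "nat \<Rightarrow> nat \<Rightarrow> (nat \<Rightarrow> nat \<Rightarrow> int) \<Rightarrow> (nat \<Rightarrow> int) \<Rightarrow> (nat \<Rightarrow> int) set" where
  "fiber m n A b = {u \<in> zvec n. (\<forall>i<n. 0 \<le> u i) \<and> (\<forall>i<m. mat_vec n A u i = b i)}"

definition int_kernel :: "nat \<Rightarrow> nat \<Rightarrow> (nat \<Rightarrow> nat \<Rightarrow> int) \<Rightarrow> (nat \<Rightarrow> int) set" where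
  "int_kernel m n A = {u \<in> zvec n. \<forall>i<m. mat_vec n A u i = 0}"

definition conformal_le :: "(nat \<Rightarrow> int) \<Rightarrow> (nat \<Rightarrow> int) \<Rightarrow> bool" where
  "conformal_le u v \<longleftrightarrow> (\<forall>i. u i * v i \<ge> 0 \<and> \<bar>u i\<bar> \<le> \<bar>v i\<bar>)"

definition graver :: "nat \<Rightarrow> nat \<Rightarrow> (nat \<Rightarrow> nat \<Rightarrow> int) \<Rightarrow> (nat \<Rightarrow> int) set" where
  "graver m n A = {u \<in> int_kernel m n A - {(\<lambda>_. 0)}.
       \<forall>v \<in> int_kernel m n A - {(\<lambda>_. 0)}. conformal_le v u \<longrightarrow> v = u}"

text \<open>Adjacency in the fiber graph G_{A,b,M} (vertex set is the fiber).\<close>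
definition fiber_adj :: "(nat \<Rightarrow> int) set \<Rightarrow> (nat \<Rightarrow> int) \<Rightarrow> (nat \<Rightarrow> int) \<Rightarrow> bool" where
  "fiber_adj M u v \<longleftrightarrow> u \<noteq> v \<and>
     ((\<lambda>i. u i - v i) \<in> M \<or> (\<lambda>i. v i - u i) \<in> M)"

definition bvec :: "nat \<Rightarrow> (nat \<Rightarrow> int) \<Rightarrow> (nat \<Rightarrow> int) \<Rightarrow> int \<Rightarrow> nat \<Rightarrow> int" where
  "bvec k w1 w2 c = (\<lambda>i. if i < k then w1 i else if i < 2*k then w2 (i - k)
                         else if i = 2*k then c else 0)"

definition neg_inf_norm :: "nat \<Rightarrow> (nat \<Rightarrow> int) \<Rightarrow> int" where
  "neg_inf_norm k w = Max ({max (- w i) 0 | i. i < k} \<union> {0})"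

definition lb :: "nat \<Rightarrow> (nat \<Rightarrow> int) \<Rightarrow> int" where
  "lb k w1 = neg_inf_norm k w1"

definition ub :: "nat \<Rightarrow> (nat \<Rightarrow> int) \<Rightarrow> int \<Rightarrow> int" where
  "ub k w2 c = c - neg_inf_norm k w2"

abbreviation FAk :: "nat \<Rightarrow> (nat \<Rightarrow> int) \<Rightarrow> (nat \<Rightarrow> int) set" where
  "FAk k b \<equiv> fiber (2*k+1) (4*k+2) (Ak k) b"

text \<open>C_s(b): elements of the fiber with u_{4k+1} (1-based) = s, i.e. 0-based index 4k.\<close>
definition Cs :: "nat \<Rightarrow> (nat \<Rightarrow> int) \<Rightarrow> int \<Rightarrow> (nat \<Rightarrow> int) set" where
  "Cs k b s = {u \<in> FAk k b. u (4*k) = s}"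

end

theory Submission
  imports Defs
begin

text \<open>Every element of the fiber has its layer coordinate \<open>u\<^sub>4\<^sub>k\<close> (0-based) in
  \<open>[l(b), u(b)]\<close>, because each row forces \<open>u\<^sub>4\<^sub>k \<ge> -w\<^sub>1\<^sub>i\<close> and
  \<open>u\<^sub>4\<^sub>k\<^sub>+\<^sub>1 = c - u\<^sub>4\<^sub>k \<ge> -w\<^sub>2\<^sub>i\<close>; this gives the "only if" parts.
  Conversely, a kernel vector \<open>g\<close> with \<open>g\<^sub>4\<^sub>k = e = \<plusminus>1\<close>, \<open>g\<^sub>4\<^sub>k\<^sub>+\<^sub>1 = -e\<close>, and in every
  coordinate pair of a row a single entry \<open>\<plusminus>e\<close> is a Graver element, since conformal
  minimality can be checked pair by pair. To move from layer \<open>s\<close> to \<open>s + 1\<close>, the pairs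
  in the \<open>w\<^sub>2\<close>-rows must lose a unit; as \<open>s < u(b)\<close> each such pair has a positive entry
  to take it from, while the pairs in the \<open>w\<^sub>1\<close>-rows may gain their unit in either slot. These \<open>2\<^sup>k\<close>
  choices give distinct neighbours; moving down is symmetric.\<close>

lemma mat_vec_Ak_upper:
  assumes "i < k"
  shows "mat_vec (4*k+2) (Ak k) u i = u i + u (k+i) - u (4*k)"
proof -
  have "(\<Sum>j<4*k+2. Ak k i j * u j) = (\<Sum>j<4*k+2. (if j = i then u i else 0)
          + (if j = k+i then u (k+i) else 0) + (if j = 4*k then - u (4*k) else 0))"
    by (rule sum.cong) (use assms in \<open>auto simp: Ak_def\<close>)
  also have "\<dots> = u i + u (k+i) - u (4*k)" using assms by (simp add: sum.distrib)
  finally show ?thesis by (simp add: mat_vec_def)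
qed

lemma mat_vec_Ak_lower:
  assumes "i < k"
  shows "mat_vec (4*k+2) (Ak k) u (k+i) = u (2*k+i) + u (3*k+i) - u (4*k+1)"
proof -
  have "(\<Sum>j<4*k+2. Ak k (k+i) j * u j) = (\<Sum>j<4*k+2. (if j = 2*k+i then u (2*k+i) else 0)
          + (if j = 3*k+i then u (3*k+i) else 0) + (if j = 4*k+1 then - u (4*k+1) else 0))"
    by (rule sum.cong) (use assms in \<open>auto simp: Ak_def\<close>)
  also have "\<dots> = u (2*k+i) + u (3*k+i) - u (4*k+1)" using assms by (simp add: sum.distrib)
  finally show ?thesis by (simp add: mat_vec_def)
qed

lemma mat_vec_Ak_last: "mat_vec (4*k+2) (Ak k) u (2*k) = u (4*k) + u (4*k+1)"
proof -
  have "(\<Sum>j<4*k+2. Ak k (2*k) j * u j) = (\<Sum>j<4*k+2. (if j = 4*k then u (4*k) else 0)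
          + (if j = 4*k+1 then u (4*k+1) else 0))"
    by (rule sum.cong) (auto simp: Ak_def)
  also have "\<dots> = u (4*k) + u (4*k+1)" by (simp add: sum.distrib)
  finally show ?thesis by (simp add: mat_vec_def)
qed

lemma Ak_row_cases:
  fixes i k :: nat
  assumes "i < 2*k+1"
  obtains i' where "i' < k" "i = i'" | i' where "i' < k" "i = k+i'" | "i = 2*k"
proof -
  consider "i < k" | "k \<le> i" "i < 2*k" | "i = 2*k" using assms by linarith
  then show ?thesis
  proof cases
    case 2 then show ?thesis using that(2)[of "i-k"] by auto
  qed (use that in auto)
qed

lemma Ak_column_cases:
  fixes j k :: nat
  assumes "j < 4*k+2"
  obtains "j = 4*k" | "j = 4*k+1"
    | i where "i < k" "j = i" | i where "i < k" "j = k+i"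
    | i where "i < k" "j = 2*k+i" | i where "i < k" "j = 3*k+i"
proof -
  consider "j < k" | "k \<le> j" "j < 2*k" | "2*k \<le> j" "j < 3*k" | "3*k \<le> j" "j < 4*k"
    | "j = 4*k" | "j = 4*k+1"
    using assms by linarith
  then show ?thesis
  proof cases
    case 2 then show ?thesis using that(4)[of "j-k"] by auto
  next
    case 3 then show ?thesis using that(5)[of "j-2*k"] by auto
  next
    case 4 then show ?thesis using that(6)[of "j-3*k"] by auto
  qed (use that in auto)
qed

lemma mat_vec_Ak_eq_iff:
  "(\<forall>i<2*k+1. mat_vec (4*k+2) (Ak k) u i = r i) \<longleftrightarrow>
   (\<forall>i<k. u i + u (k+i) - u (4*k) = r i \<and> u (2*k+i) + u (3*k+i) - u (4*k+1) = r (k+i))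
   \<and> u (4*k) + u (4*k+1) = r (2*k)"
proof (intro iffI conjI allI impI)
  fix i assume rows: "\<forall>i<2*k+1. mat_vec (4*k+2) (Ak k) u i = r i" and "i < k"
  then show "u i + u (k+i) - u (4*k) = r i" "u (2*k+i) + u (3*k+i) - u (4*k+1) = r (k+i)"
    using rows[rule_format, of i] rows[rule_format, of "k+i"]
      mat_vec_Ak_upper[of i k u] mat_vec_Ak_lower[of i k u] by auto
next
  assume rows: "\<forall>i<2*k+1. mat_vec (4*k+2) (Ak k) u i = r i"
  then show "u (4*k) + u (4*k+1) = r (2*k)"
    using rows[rule_format, of "2*k"] mat_vec_Ak_last[of k u] by auto
next
  fix i assume "i < 2*k+1" and eqs:
    "(\<forall>i<k. u i + u (k+i) - u (4*k) = r i \<and> u (2*k+i) + u (3*k+i) - u (4*k+1) = r (k+i))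
     \<and> u (4*k) + u (4*k+1) = r (2*k)"
  then show "mat_vec (4*k+2) (Ak k) u i = r i"
  proof (cases rule: Ak_row_cases)
    case (1 i')
    then show ?thesis using eqs mat_vec_Ak_upper[of i' k u] by auto
  next
    case (2 i')
    then show ?thesis using eqs mat_vec_Ak_lower[of i' k u] by auto
  next
    case 3
    then show ?thesis using eqs mat_vec_Ak_last[of k u] by auto
  qed
qed

lemma mem_fiber_Ak_iff:
  "u \<in> FAk k (bvec k w1 w2 c) \<longleftrightarrow> u \<in> zvec (4*k+2) \<and> (\<forall>j<4*k+2. 0 \<le> u j) \<and>
    (\<forall>i<k. u i + u (k+i) - u (4*k) = w1 i \<and> u (2*k+i) + u (3*k+i) - u (4*k+1) = w2 i)
   \<and> u (4*k) + u (4*k+1) = c"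
  unfolding fiber_def using mat_vec_Ak_eq_iff[of k u "bvec k w1 w2 c"] by (auto simp: bvec_def)

lemma mem_int_kernel_Ak_iff:
  "g \<in> int_kernel (2*k+1) (4*k+2) (Ak k) \<longleftrightarrow> g \<in> zvec (4*k+2) \<and>
    (\<forall>i<k. g i + g (k+i) - g (4*k) = 0 \<and> g (2*k+i) + g (3*k+i) - g (4*k+1) = 0)
   \<and> g (4*k) + g (4*k+1) = 0"
  unfolding int_kernel_def using mat_vec_Ak_eq_iff[of k g "\<lambda>_. 0"] by auto

lemma neg_inf_norm_nonneg: "0 \<le> neg_inf_norm k w"
  unfolding neg_inf_norm_def by (rule Max_ge) auto

lemma neg_inf_norm_ge: "i < k \<Longrightarrow> - w i \<le> neg_inf_norm k w"
  unfolding neg_inf_norm_def by (rule order.trans[OF max.cobounded1 Max_ge]) auto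

lemma neg_inf_norm_le: "(\<And>i. i < k \<Longrightarrow> - w i \<le> t) \<Longrightarrow> 0 \<le> t \<Longrightarrow> neg_inf_norm k w \<le> t"
  unfolding neg_inf_norm_def by (rule Max.boundedI) auto

lemma fiber_Ak_bounds:
  assumes "u \<in> FAk k (bvec k w1 w2 c)"
  shows "lb k w1 \<le> u (4*k)" and "u (4*k) \<le> ub k w2 c"
proof -
  from assms have nonneg: "\<forall>j<4*k+2. 0 \<le> u j"
    and rows: "\<forall>i<k. u i + u (k+i) - u (4*k) = w1 i \<and> u (2*k+i) + u (3*k+i) - u (4*k+1) = w2 i"
    and last: "u (4*k) + u (4*k+1) = c"
    unfolding mem_fiber_Ak_iff by auto
  have apex: "0 \<le> u (4*k)" "0 \<le> u (4*k+1)" using nonneg by auto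
  have "- w1 i \<le> u (4*k)" if "i < k" for i
    using that rows nonneg[rule_format, of i] nonneg[rule_format, of "k+i"] by force
  then show "lb k w1 \<le> u (4*k)" unfolding lb_def using apex(1) by (rule neg_inf_norm_le)
  have "- w2 i \<le> u (4*k+1)" if "i < k" for i
    using that rows nonneg[rule_format, of "2*k+i"] nonneg[rule_format, of "3*k+i"] by force
  then have "neg_inf_norm k w2 \<le> u (4*k+1)" using apex(2) by (rule neg_inf_norm_le)
  then show "u (4*k) \<le> ub k w2 c" using last unfolding ub_def by simp
qed

lemma finite_zvec_bounded: "finite {u \<in> zvec n. \<forall>j<n. u j \<in> {0..B}}"
proof -
  let ?F = "{u \<in> zvec n. \<forall>j<n. u j \<in> {0..B}}"
  have "inj_on (\<lambda>u. map u [0..<n]) ?F"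
  proof (rule inj_onI)
    fix u u' assume "u \<in> ?F" "u' \<in> ?F" "map u [0..<n] = map u' [0..<n]"
    then have "u j = u' j" if "j < n" for j using that by (simp add: map_eq_conv)
    moreover have "u j = u' j" if "\<not> j < n" for j
      using that \<open>u \<in> ?F\<close> \<open>u' \<in> ?F\<close> unfolding zvec_def by simp
    ultimately show "u = u'" by blast
  qed
  moreover have "(\<lambda>u. map u [0..<n]) ` ?F \<subseteq> {xs. set xs \<subseteq> {0..B} \<and> length xs = n}" by auto
  then have "finite ((\<lambda>u. map u [0..<n]) ` ?F)"
    by (rule finite_subset) (rule finite_lists_length_eq, simp)
  ultimately show ?thesis using finite_imageD by blast
qed

lemma finite_fiber_Ak: "finite (FAk k (bvec k w1 w2 c))"
proof -
  define B where "B = \<bar>c\<bar> + (\<Sum>i<k. \<bar>w1 i\<bar> + \<bar>w2 i\<bar>)"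
  have w_le_B: "\<bar>c\<bar> + \<bar>w1 i\<bar> \<le> B" "\<bar>c\<bar> + \<bar>w2 i\<bar> \<le> B" if "i < k" for i
    using member_le_sum[of i "{..<k}" "\<lambda>i. \<bar>w1 i\<bar> + \<bar>w2 i\<bar>"] that unfolding B_def by auto
  have c_le_B: "\<bar>c\<bar> \<le> B" unfolding B_def by (simp add: sum_nonneg)
  have "u j \<in> {0..B}" if u: "u \<in> FAk k (bvec k w1 w2 c)" and j: "j < 4*k+2" for u j
  proof -
    from u have nonneg: "\<forall>j<4*k+2. 0 \<le> u j"
      and rows: "\<forall>i<k. u i + u (k+i) - u (4*k) = w1 i \<and> u (2*k+i) + u (3*k+i) - u (4*k+1) = w2 i"
      and last: "u (4*k) + u (4*k+1) = c"
      unfolding mem_fiber_Ak_iff by auto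
    have "0 \<le> u (4*k)" "0 \<le> u (4*k+1)" using nonneg by auto
    then have apex: "u (4*k) \<le> \<bar>c\<bar>" "u (4*k+1) \<le> \<bar>c\<bar>" using last by linarith+
    have blocks: "u i \<le> B" "u (k+i) \<le> B" "u (2*k+i) \<le> B" "u (3*k+i) \<le> B" if "i < k" for i
    proof -
      have "u i + u (k+i) - u (4*k) = w1 i" "u (2*k+i) + u (3*k+i) - u (4*k+1) = w2 i"
        using rows that by auto
      moreover have "0 \<le> u i" "0 \<le> u (k+i)" "0 \<le> u (2*k+i)" "0 \<le> u (3*k+i)"
        using nonneg that by auto
      ultimately show "u i \<le> B" "u (k+i) \<le> B" "u (2*k+i) \<le> B" "u (3*k+i) \<le> B"
        using apex w_le_B[OF that] by linarith+
    qed
    have "0 \<le> u j" using nonneg j by blast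
    moreover from j have "u j \<le> B"
    proof (cases rule: Ak_column_cases)
      case 1 then show ?thesis using apex c_le_B by simp
    next
      case 2 then show ?thesis using apex c_le_B by simp
    qed (use blocks in simp_all)
    ultimately show ?thesis by simp
  qed
  then have "FAk k (bvec k w1 w2 c) \<subseteq> {u \<in> zvec (4*k+2). \<forall>j<4*k+2. u j \<in> {0..B}}"
    unfolding fiber_def by blast
  then show ?thesis using finite_zvec_bounded by (rule finite_subset)
qed

subsection \<open>Graver moves between adjacent layers\<close>

definition Ak_move :: "nat \<Rightarrow> int \<Rightarrow> nat set \<Rightarrow> nat set \<Rightarrow> nat \<Rightarrow> int" where
  "Ak_move k e P Q j =
     (if j < k then (if j \<in> P then e else 0)
      else if j < 2*k then (if j - k \<in> P then 0 else e)
      else if j < 3*k then (if j - 2*k \<in> Q then -e else 0)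
      else if j < 4*k then (if j - 3*k \<in> Q then 0 else -e)
      else if j = 4*k then e else if j = 4*k+1 then -e else 0)"

lemma Ak_move_apex: "Ak_move k e P Q (4*k) = e" "Ak_move k e P Q (4*k+1) = -e"
  by (simp_all add: Ak_move_def)

lemma Ak_move_block:
  assumes "i < k"
  shows "Ak_move k e P Q i = (if i \<in> P then e else 0)"
    and "Ak_move k e P Q (k+i) = (if i \<in> P then 0 else e)"
    and "Ak_move k e P Q (2*k+i) = (if i \<in> Q then -e else 0)"
    and "Ak_move k e P Q (3*k+i) = (if i \<in> Q then 0 else -e)"
  using assms by (simp_all add: Ak_move_def)

lemma Ak_move_zvec: "Ak_move k e P Q \<in> zvec (4*k+2)"
  unfolding zvec_def Ak_move_def by auto

lemma Ak_move_support_left: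
  "e \<noteq> 0 \<Longrightarrow> P \<subseteq> {..<k} \<Longrightarrow> {i. i < k \<and> Ak_move k e P Q i \<noteq> 0} = P"
  by (auto simp: Ak_move_block split: if_splits)

lemma Ak_move_support_right:
  "e \<noteq> 0 \<Longrightarrow> Q \<subseteq> {..<k} \<Longrightarrow> {i. i < k \<and> Ak_move k e P Q (2*k+i) \<noteq> 0} = Q"
  by (auto simp: Ak_move_block split: if_splits)

lemma inj_on_Ak_move_left: "e \<noteq> 0 \<Longrightarrow> inj_on (\<lambda>P. Ak_move k e P Q) (Pow {..<k})"
  by (rule inj_onI) (metis Ak_move_support_left PowD)

lemma inj_on_Ak_move_right: "e \<noteq> 0 \<Longrightarrow> inj_on (\<lambda>Q. Ak_move k e P Q) (Pow {..<k})"
  by (rule inj_onI) (metis Ak_move_support_right PowD)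

lemma conformal_pair_cases:
  fixes p q x y e d :: int
  assumes "e = 1 \<or> e = -1" "x = 0 \<or> x = e" "x + y = e"
    and "0 \<le> p * x" "\<bar>p\<bar> \<le> \<bar>x\<bar>" "0 \<le> q * y" "\<bar>q\<bar> \<le> \<bar>y\<bar>" "p + q = d"
  shows "(d = 0 \<longrightarrow> p = 0 \<and> q = 0) \<and> (d = e \<longrightarrow> p = x \<and> q = y)"
  using assms by (auto simp: abs_if split: if_splits)

lemma Ak_move_in_graver:
  assumes e: "e = 1 \<or> e = -1"
  shows "Ak_move k e P Q \<in> graver (2*k+1) (4*k+2) (Ak k)"
proof -
  let ?g = "Ak_move k e P Q"
  have g_kernel: "?g \<in> int_kernel (2*k+1) (4*k+2) (Ak k)"
    unfolding mem_int_kernel_Ak_iff using Ak_move_zvec Ak_move_apex[of k e P Q]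
    by (simp add: Ak_move_block)
  have g_nonzero: "?g \<noteq> (\<lambda>_. 0)" using Ak_move_apex(1)[of k e P Q] e by force
  have g_block: "(?g i = 0 \<or> ?g i = e) \<and> ?g i + ?g (k+i) = e
      \<and> (?g (2*k+i) = 0 \<or> ?g (2*k+i) = -e) \<and> ?g (2*k+i) + ?g (3*k+i) = -e" if "i < k" for i
    using that by (simp add: Ak_move_block)
  have "h = ?g" if h_kernel: "h \<in> int_kernel (2*k+1) (4*k+2) (Ak k)" and "h \<noteq> (\<lambda>_. 0)"
    and "conformal_le h ?g" for h
  proof -
    from h_kernel have hz: "h \<in> zvec (4*k+2)"
      and rows: "\<forall>i<k. h i + h (k+i) = h (4*k) \<and> h (2*k+i) + h (3*k+i) = h (4*k+1)"
      and apex: "h (4*k+1) = - h (4*k)"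
      unfolding mem_int_kernel_Ak_iff by auto
    have conf: "0 \<le> h j * ?g j \<and> \<bar>h j\<bar> \<le> \<bar>?g j\<bar>" for j
      using \<open>conformal_le h ?g\<close> unfolding conformal_le_def by auto
    have left: "(h (4*k) = 0 \<longrightarrow> h i = 0 \<and> h (k+i) = 0)
        \<and> (h (4*k) = e \<longrightarrow> h i = ?g i \<and> h (k+i) = ?g (k+i))" if "i < k" for i
      by (rule conformal_pair_cases[OF e]) (use g_block rows conf that in auto)
    have right: "(h (4*k+1) = 0 \<longrightarrow> h (2*k+i) = 0 \<and> h (3*k+i) = 0)
        \<and> (h (4*k+1) = -e \<longrightarrow> h (2*k+i) = ?g (2*k+i) \<and> h (3*k+i) = ?g (3*k+i))" if "i < k" for i
      by (rule conformal_pair_cases) (use e g_block rows conf that in auto)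
    have "h (4*k) = 0 \<or> h (4*k) = e"
      using conf[of "4*k"] Ak_move_apex(1)[of k e P Q] e by (auto simp: abs_if split: if_splits)
    then consider "h (4*k) = 0" | "h (4*k) = e" by blast
    then show "h = ?g"
    proof cases
      case 1
      have "h j = 0" if "j < 4*k+2" for j
        using that by (rule Ak_column_cases) (use 1 apex left right in auto)
      moreover have "h j = 0" if "\<not> j < 4*k+2" for j
        using that hz unfolding zvec_def by simp
      ultimately have "h = (\<lambda>_. 0)" by blast
      with \<open>h \<noteq> (\<lambda>_. 0)\<close> show ?thesis by blast
    next
      case 2
      have "h j = ?g j" if "j < 4*k+2" for j
        using that by (rule Ak_column_cases) (use 2 apex left right Ak_move_apex[of k e P Q] in auto)
      moreover have "h j = ?g j" if "\<not> j < 4*k+2" for j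
        using that hz Ak_move_zvec[of k e P Q] unfolding zvec_def by simp
      ultimately show ?thesis by blast
    qed
  qed
  with g_kernel g_nonzero show ?thesis unfolding graver_def by auto
qed

subsection \<open>Counting neighbours in the adjacent layers\<close>

lemma fiber_add_int_kernel:
  assumes "u \<in> fiber m n A b" "g \<in> int_kernel m n A" "\<forall>j<n. 0 \<le> u j + g j"
  shows "(\<lambda>j. u j + g j) \<in> fiber m n A b"
  using assms unfolding fiber_def int_kernel_def zvec_def mat_vec_def
  by (auto simp: sum.distrib algebra_simps)

lemma fiber_adj_add_graver:
  assumes "g \<in> graver m n A"
  shows "fiber_adj (graver m n A) v (\<lambda>j. v j + g j)"
proof -
  have "g \<noteq> (\<lambda>_. 0)" using assms unfolding graver_def by auto
  then have "v \<noteq> (\<lambda>j. v j + g j)" by (auto simp: fun_eq_iff)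
  moreover have "(\<lambda>j. (v j + g j) - v j) = g" by simp
  ultimately show ?thesis using assms unfolding fiber_adj_def by auto
qed

lemma card_Cs_neighbours_ge:
  fixes m :: "nat set \<Rightarrow> nat \<Rightarrow> int"
  assumes v: "v \<in> Cs k b s" and fin: "finite (FAk k b)"
    and moves: "\<And>P. P \<subseteq> {..<k} \<Longrightarrow> m P \<in> graver (2*k+1) (4*k+2) (Ak k) \<and> m P (4*k) = t
        \<and> (\<forall>j<4*k+2. 0 \<le> v j + m P j)"
    and inj: "inj_on m (Pow {..<k})"
  shows "2^k \<le> card {v' \<in> Cs k b (s + t). fiber_adj (graver (2*k+1) (4*k+2) (Ak k)) v v'}"
    (is "_ \<le> card ?N")
proof -
  define nb where "nb P = (\<lambda>j. v j + m P j)" for P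
  have "nb P \<in> ?N" if "P \<subseteq> {..<k}" for P
  proof -
    from moves[OF that] have "m P \<in> int_kernel (2*k+1) (4*k+2) (Ak k)"
      unfolding graver_def by auto
    then have "nb P \<in> FAk k b"
      unfolding nb_def using v moves[OF that] by (intro fiber_add_int_kernel) (auto simp: Cs_def)
    moreover have "nb P (4*k) = s + t" using v moves[OF that] by (simp add: nb_def Cs_def)
    moreover have "fiber_adj (graver (2*k+1) (4*k+2) (Ak k)) v (nb P)"
      unfolding nb_def using moves[OF that] by (intro fiber_adj_add_graver) auto
    ultimately show ?thesis by (simp add: Cs_def)
  qed
  then have "nb ` Pow {..<k} \<subseteq> ?N" by auto
  moreover have "finite ?N" by (rule finite_subset[OF _ fin]) (auto simp: Cs_def)
  moreover have "inj_on nb (Pow {..<k})"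
  proof (rule inj_onI)
    fix P P' assume "P \<in> Pow {..<k}" "P' \<in> Pow {..<k}" "nb P = nb P'"
    then have "m P = m P'" by (simp add: nb_def fun_eq_iff)
    with inj \<open>P \<in> Pow {..<k}\<close> \<open>P' \<in> Pow {..<k}\<close> show "P = P'" by (blast dest: inj_onD)
  qed
  then have "card (nb ` Pow {..<k}) = 2^k" by (simp add: card_image card_Pow)
  ultimately show ?thesis by (metis card_mono)
qed

lemma card_Cs_neighbours_up:
  assumes v: "v \<in> Cs k (bvec k w1 w2 c) s" and s: "s < ub k w2 c"
  shows "2^k \<le> card {v' \<in> Cs k (bvec k w1 w2 c) (s + 1).
                        fiber_adj (graver (2*k+1) (4*k+2) (Ak k)) v v'}"
proof -
  from v have nonneg: "\<forall>j<4*k+2. 0 \<le> v j"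
    and rows: "\<forall>i<k. v (2*k+i) + v (3*k+i) - v (4*k+1) = w2 i"
    and apex: "v (4*k) = s" "v (4*k) + v (4*k+1) = c"
    unfolding Cs_def mem_fiber_Ak_iff by auto
  have room: "1 \<le> v (4*k+1)" using s apex neg_inf_norm_nonneg[of k w2] unfolding ub_def by simp
  have pair_room: "1 \<le> v (2*k+i) + v (3*k+i)" if "i < k" for i
    using neg_inf_norm_ge[OF that, of w2] s rows that apex unfolding ub_def by force
  define Q where "Q = {i. i < k \<and> 0 < v (2*k+i)}"
  have "0 \<le> v j + Ak_move k 1 P Q j" if "j < 4*k+2" for P j
    using that
  proof (cases rule: Ak_column_cases)
    case 2 then show ?thesis using room Ak_move_apex(2)[of k 1 P Q] by simp
  next
    case (6 i)
    then have "0 \<le> v (2*k+i)" "0 \<le> v (3*k+i)" using nonneg by auto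
    then show ?thesis using 6 pair_room[OF \<open>i < k\<close>] by (auto simp: Ak_move_block Q_def)
  qed (use nonneg Ak_move_apex[of k 1 P Q] in \<open>auto simp: Ak_move_block Q_def\<close>)
  then show ?thesis
    using finite_fiber_Ak inj_on_Ak_move_left[of 1 k Q] Ak_move_in_graver[of 1 k _ Q] Ak_move_apex
    by (intro card_Cs_neighbours_ge[OF v]) auto
qed

lemma card_Cs_neighbours_down:
  assumes v: "v \<in> Cs k (bvec k w1 w2 c) s" and s: "lb k w1 < s"
  shows "2^k \<le> card {v' \<in> Cs k (bvec k w1 w2 c) (s - 1).
                        fiber_adj (graver (2*k+1) (4*k+2) (Ak k)) v v'}"
proof -
  from v have nonneg: "\<forall>j<4*k+2. 0 \<le> v j"
    and rows: "\<forall>i<k. v i + v (k+i) - v (4*k) = w1 i"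
    and apex: "v (4*k) = s"
    unfolding Cs_def mem_fiber_Ak_iff by auto
  have room: "1 \<le> v (4*k)" using s apex neg_inf_norm_nonneg[of k w1] unfolding lb_def by simp
  have pair_room: "1 \<le> v i + v (k+i)" if "i < k" for i
    using neg_inf_norm_ge[OF that, of w1] s rows that apex unfolding lb_def by force
  define P where "P = {i. i < k \<and> 0 < v i}"
  have "0 \<le> v j + Ak_move k (-1) P Q j" if "j < 4*k+2" for Q j
    using that
  proof (cases rule: Ak_column_cases)
    case 1 then show ?thesis using room Ak_move_apex(1)[of k "-1" P Q] by simp
  next
    case (4 i)
    then have "0 \<le> v i" "0 \<le> v (k+i)" using nonneg by auto
    then show ?thesis using 4 pair_room[OF \<open>i < k\<close>] by (auto simp: Ak_move_block P_def)
  qed (use nonneg Ak_move_apex[of k "-1" P Q] in \<open>auto simp: Ak_move_block P_def\<close>)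
  then have "2^k \<le> card {v' \<in> Cs k (bvec k w1 w2 c) (s + -1).
                        fiber_adj (graver (2*k+1) (4*k+2) (Ak k)) v v'}"
    using finite_fiber_Ak inj_on_Ak_move_right[of "-1" k P] Ak_move_in_graver[of "-1" k P]
      Ak_move_apex
    by (intro card_Cs_neighbours_ge[OF v]) auto
  then show ?thesis by simp
qed

text \<open>Only the hypothesis \<open>v \<in> Cs k b s\<close> is used: it implies the others except
  \<open>k \<ge> 1\<close>, and for \<open>k = 0\<close> the bound \<open>2\<^sup>k = 1\<close> still holds.\<close>

theorem proposition2:
  fixes k :: nat and w1 w2 :: "nat \<Rightarrow> int" and c s :: int and v :: "nat \<Rightarrow> int"
  defines "b \<equiv> bvec k w1 w2 c"
  defines "G \<equiv> graver (2*k+1) (4*k+2) (Ak k)"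
  assumes "k \<ge> 1"
    and "FAk k b \<noteq> {}"
    and "lb k w1 \<le> s" and "s \<le> ub k w2 c"
    and "v \<in> Cs k b s"
  shows "((\<exists>v'\<in>Cs k b (s - 1). fiber_adj G v v') \<longleftrightarrow> s > lb k w1)
       \<and> (s > lb k w1 \<longrightarrow> card {v'\<in>Cs k b (s - 1). fiber_adj G v v'} \<ge> 2^k)
       \<and> ((\<exists>v'\<in>Cs k b (s + 1). fiber_adj G v v') \<longleftrightarrow> s < ub k w2 c)
       \<and> (s < ub k w2 c \<longrightarrow> card {v'\<in>Cs k b (s + 1). fiber_adj G v v'} \<ge> 2^k)"
proof -
  have layer_bounds: "lb k w1 \<le> t \<and> t \<le> ub k w2 c" if "v' \<in> Cs k b t" for v' t
    using that fiber_Ak_bounds unfolding Cs_def b_def by auto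
  have down: "s > lb k w1 \<Longrightarrow> card {v'\<in>Cs k b (s - 1). fiber_adj G v v'} \<ge> 2^k"
    using card_Cs_neighbours_down \<open>v \<in> Cs k b s\<close> unfolding b_def G_def by blast
  have up: "s < ub k w2 c \<Longrightarrow> card {v'\<in>Cs k b (s + 1). fiber_adj G v v'} \<ge> 2^k"
    using card_Cs_neighbours_up \<open>v \<in> Cs k b s\<close> unfolding b_def G_def by blast
  have witness: "\<exists>x\<in>A. R x" if "(2::nat)^k \<le> card {x \<in> A. R x}" for A R
    using that by (cases "{x \<in> A. R x} = {}") auto
  have "(\<exists>v'\<in>Cs k b (s - 1). fiber_adj G v v') \<longleftrightarrow> s > lb k w1"
    using layer_bounds[of _ "s - 1"] down witness by fastforce
  moreover have "(\<exists>v'\<in>Cs k b (s + 1). fiber_adj G v v') \<longleftrightarrow> s < ub k w2 c"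
    using layer_bounds[of _ "s + 1"] up witness by fastforce
  ultimately show ?thesis using down up by blast
qed

end
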